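(* Let $f(t)=\sum_{i=0}^m a_it^i\in D[t;\sigma]$ be monic of degree $m\ge 2$ with $a_0\neq0$. Then for every $j\in\{1,\dots,m-1\}$, the left multiplication $L_{t^j}:S_f\to S_f$, $x\mapsto t^j\circ x$, is surjective if and only if $\sigma$ is surjective. In particular, if $\sigma$ is not surjective then $S_f$ is not a left division algebra.
   Context: $D$ is an associative division ring and $\sigma$ a ring endomorphism of $D$. $D[t;\sigma]$ is the skew polynomial ring with $ta=\sigma(a)t$. For monic $f$ of degree $m$, $S_f$ is the set of polynomials of degree $<m$ with multiplication $g\circ h=$ remainder of $gh$ upon right division by $f$ ($gh=qf+r$ with $\deg r<m$). $S_f$ is a left division algebra if $L_a(x)=a\circ x$ is bijective for every nonzero $a\in S_f$. *)

theory Defs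
  imports Main
begin

text \<open>Skew polynomials in D[t;sigma] are represented by their coefficient
functions nat => 'a with finite support; p n is the coefficient of t^n.
The multiplication is (a t^i)(b t^j) = a sigma^i(b) t^(i+j).\<close>

definition ring_endo :: "('a::division_ring \<Rightarrow> 'a) \<Rightarrow> bool" where
  "ring_endo \<sigma> \<longleftrightarrow> (\<forall>x y. \<sigma> (x + y) = \<sigma> x + \<sigma> y) \<and>
                  (\<forall>x y. \<sigma> (x * y) = \<sigma> x * \<sigma> y) \<and> \<sigma> 1 = 1"

definition skew_polys :: "(nat \<Rightarrow> 'a::zero) set" where
  "skew_polys = {p. \<exists>N. \<forall>n\<ge>N. p n = 0}"

definition deg_less :: "(nat \<Rightarrow> 'a::zero) \<Rightarrow> nat \<Rightarrow> bool" where
  "deg_less p m \<longleftrightarrow> (\<forall>n\<ge>m. p n = 0)"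

definition skew_mult :: "('a::division_ring \<Rightarrow> 'a) \<Rightarrow> (nat \<Rightarrow> 'a) \<Rightarrow> (nat \<Rightarrow> 'a) \<Rightarrow> nat \<Rightarrow> 'a" where
  "skew_mult \<sigma> p q = (\<lambda>n. \<Sum>i\<le>n. p i * (\<sigma> ^^ i) (q (n - i)))"

definition skew_monom :: "nat \<Rightarrow> nat \<Rightarrow> 'a::{zero,one}" where
  "skew_monom j = (\<lambda>n. if n = j then 1 else 0)"

definition skew_rem :: "('a::division_ring \<Rightarrow> 'a) \<Rightarrow> (nat \<Rightarrow> 'a) \<Rightarrow> nat \<Rightarrow> (nat \<Rightarrow> 'a) \<Rightarrow> nat \<Rightarrow> 'a" where
  "skew_rem \<sigma> f m g = (THE r. deg_less r m \<and>
      (\<exists>q\<in>skew_polys. g = (\<lambda>n. skew_mult \<sigma> q f n + r n)))"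

definition Sf_carrier :: "nat \<Rightarrow> (nat \<Rightarrow> 'a::zero) set" where
  "Sf_carrier m = {x. deg_less x m}"

definition Sf_mult :: "('a::division_ring \<Rightarrow> 'a) \<Rightarrow> (nat \<Rightarrow> 'a) \<Rightarrow> nat \<Rightarrow> (nat \<Rightarrow> 'a) \<Rightarrow> (nat \<Rightarrow> 'a) \<Rightarrow> nat \<Rightarrow> 'a" where
  "Sf_mult \<sigma> f m g h = skew_rem \<sigma> f m (skew_mult \<sigma> g h)"

definition left_division_algebra :: "('a::division_ring \<Rightarrow> 'a) \<Rightarrow> (nat \<Rightarrow> 'a) \<Rightarrow> nat \<Rightarrow> bool" where
  "left_division_algebra \<sigma> f m \<longleftrightarrow>
     (\<forall>a\<in>Sf_carrier m. a \<noteq> (\<lambda>_. 0) \<longrightarrow> bij_betw (Sf_mult \<sigma> f m a) (Sf_carrier m) (Sf_carrier m))"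

end

theory Submission
  imports Defs
begin

(* Left multiplication by t^j sends x (deg x < m) to t^j x, of degree < j + m, and reducing
  modulo f subtracts q f with deg q < j.  Because f_0 is nonzero, the coefficients of q f below
  t^j determine q triangularly from those of the remainder, while the coefficient of q f at
  t^(j-1+m) is q_(j-1).  Prescribing the remainder -b sigma^(j-1)(f_0) t^(j-1) forces q_(j-1) = b,
  and comparing with t^j x gives b = sigma^j(x_(m-1)), so b lies in the image of sigma.
  Conversely, if sigma is onto, for any r solve the triangular system for q so that q f + r
  vanishes below t^j; then q f + r = t^j x, with x obtained by applying sigma^(-j) to its
  coefficients. *)

lemma ring_endo_0: "ring_endo \<sigma> \<Longrightarrow> \<sigma> 0 = 0"
  unfolding ring_endo_def by (metis add_cancel_right_right)

lemma ring_endo_1: "ring_endo \<sigma> \<Longrightarrow> \<sigma> 1 = 1"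
  unfolding ring_endo_def by simp

lemma ring_endo_nonzero:
  assumes "ring_endo \<sigma>" "x \<noteq> 0"
  shows "\<sigma> x \<noteq> 0"
proof
  assume "\<sigma> x = 0"
  then have "\<sigma> (x * inverse x) = 0"
    using assms(1) unfolding ring_endo_def by simp
  with assms show False
    using ring_endo_1 by force
qed

lemma ring_endo_funpow: "ring_endo \<sigma> \<Longrightarrow> ring_endo (\<sigma> ^^ k)"
  by (induction k) (auto simp: ring_endo_def)

lemma deg_less_imp_skew_polys: "deg_less p N \<Longrightarrow> p \<in> skew_polys"
  unfolding deg_less_def skew_polys_def by blast

lemma skew_polys_add:
  fixes p q :: "nat \<Rightarrow> 'a::monoid_add"
  assumes "p \<in> skew_polys" "q \<in> skew_polys"
  shows "(\<lambda>n. p n + q n) \<in> skew_polys"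
proof -
  obtain N1 N2 where "\<forall>n\<ge>N1. p n = 0" "\<forall>n\<ge>N2. q n = 0"
    using assms by (auto simp: skew_polys_def)
  then have "\<forall>n\<ge>max N1 N2. p n + q n = 0" by simp
  then show ?thesis unfolding skew_polys_def by blast
qed

lemma skew_polys_diff:
  fixes p q :: "nat \<Rightarrow> 'a::group_add"
  assumes "p \<in> skew_polys" "q \<in> skew_polys"
  shows "(\<lambda>n. p n - q n) \<in> skew_polys"
proof -
  obtain N1 N2 where "\<forall>n\<ge>N1. p n = 0" "\<forall>n\<ge>N2. q n = 0"
    using assms by (auto simp: skew_polys_def)
  then have "\<forall>n\<ge>max N1 N2. p n - q n = 0" by simp
  then show ?thesis unfolding skew_polys_def by blast
qed

lemma skew_mult_add_left:
  "skew_mult \<sigma> (\<lambda>i. p i + q i) f n = skew_mult \<sigma> p f n + skew_mult \<sigma> q f n"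
  unfolding skew_mult_def by (simp add: distrib_right sum.distrib)

lemma skew_mult_diff_left:
  "skew_mult \<sigma> (\<lambda>i. p i - q i) f n = skew_mult \<sigma> p f n - skew_mult \<sigma> q f n"
  unfolding skew_mult_def by (simp add: left_diff_distrib sum_subtractf)

lemma skew_mult_zero_left: "skew_mult \<sigma> (\<lambda>_. 0) f n = 0"
  unfolding skew_mult_def by simp

lemma skew_mult_monom_left:
  "skew_mult \<sigma> (\<lambda>i. if i = k then c else 0) f n =
    (if k \<le> n then c * (\<sigma> ^^ k) (f (n - k)) else 0)"
proof -
  have "skew_mult \<sigma> (\<lambda>i. if i = k then c else 0) f n =
      (\<Sum>i\<le>n. if i = k then c * (\<sigma> ^^ k) (f (n - k)) else 0)"
    unfolding skew_mult_def by (rule sum.cong) auto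
  then show ?thesis by simp
qed

lemma skew_mult_skew_monom:
  "skew_mult \<sigma> (skew_monom j) x n = (if j \<le> n then (\<sigma> ^^ j) (x (n - j)) else 0)"
  unfolding skew_monom_def using skew_mult_monom_left[of \<sigma> j 1 x n] by simp

lemma skew_mult_last_term:
  "skew_mult \<sigma> q f n = q n * (\<sigma> ^^ n) (f 0) + (\<Sum>i<n. q i * (\<sigma> ^^ i) (f (n - i)))"
proof -
  have "{..n} = insert n {..<n}" by auto
  then show ?thesis unfolding skew_mult_def by simp
qed

locale skew_polynomial_ring =
  fixes \<sigma> :: "'a::division_ring \<Rightarrow> 'a"
  assumes ring_endo: "ring_endo \<sigma>"
begin

lemma funpow_zero [simp]: "(\<sigma> ^^ k) 0 = 0"
  using ring_endo ring_endo_0 ring_endo_funpow by blast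

lemma funpow_one [simp]: "(\<sigma> ^^ k) 1 = 1"
  using ring_endo ring_endo_1 ring_endo_funpow by blast

lemma funpow_nonzero: "x \<noteq> 0 \<Longrightarrow> (\<sigma> ^^ k) x \<noteq> 0"
  using ring_endo ring_endo_nonzero ring_endo_funpow by blast

lemma skew_mult_lowest_coeff:
  assumes f0: "f 0 \<noteq> 0" and low: "\<forall>n<k. skew_mult \<sigma> q f n = 0"
  shows "skew_mult \<sigma> q f k = q k * (\<sigma> ^^ k) (f 0)"
proof -
  have "q n = 0" if "n < k" for n
    using that
  proof (induction n rule: less_induct)
    case (less n)
    then have "skew_mult \<sigma> q f n = q n * (\<sigma> ^^ n) (f 0)"
      by (simp add: skew_mult_last_term)
    then show ?case
      using low less.prems f0 funpow_nonzero by auto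
  qed
  then show ?thesis by (simp add: skew_mult_last_term)
qed

lemma exists_skew_mult_cancel_low_coeffs:
  assumes f0: "f 0 \<noteq> 0"
  shows "\<exists>q. deg_less q k \<and> (\<forall>n<k. skew_mult \<sigma> q f n + r n = 0)"
proof (induction k)
  case 0
  show ?case by (auto simp: deg_less_def)
next
  case (Suc k)
  then obtain q where q: "deg_less q k" "\<forall>n<k. skew_mult \<sigma> q f n + r n = 0"
    by blast
  define d where "d = (\<sigma> ^^ k) (f 0)"
  define c where "c = - (skew_mult \<sigma> q f k + r k) * inverse d"
  define q' where "q' = (\<lambda>i. q i + (if i = k then c else 0))"
  have d: "d \<noteq> 0"
    unfolding d_def using funpow_nonzero[OF f0] .
  have q'f: "skew_mult \<sigma> q' f n =
      skew_mult \<sigma> q f n + (if k \<le> n then c * (\<sigma> ^^ k) (f (n - k)) else 0)" for n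
    unfolding q'_def skew_mult_add_left skew_mult_monom_left ..
  have "c * d = - (skew_mult \<sigma> q f k + r k)"
    unfolding c_def using d by (simp add: mult.assoc)
  then have "\<forall>n<Suc k. skew_mult \<sigma> q' f n + r n = 0"
    using q(2) by (auto simp: q'f d_def less_Suc_eq algebra_simps)
  moreover have "deg_less q' (Suc k)"
    using q(1) unfolding q'_def deg_less_def by auto
  ultimately show ?case by blast
qed

lemma skew_monom_mult_onto:
  assumes "surj \<sigma>" "deg_less h (j + m)" "\<forall>n<j. h n = 0"
  shows "\<exists>x\<in>Sf_carrier m. skew_mult \<sigma> (skew_monom j) x = h"
proof
  let ?x = "\<lambda>k. if k < m then inv (\<sigma> ^^ j) (h (k + j)) else 0"
  show "?x \<in> Sf_carrier m"
    by (simp add: Sf_carrier_def deg_less_def)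
  have "surj (\<sigma> ^^ j)"
    using assms(1) by (rule surj_fn)
  then show "skew_mult \<sigma> (skew_monom j) ?x = h"
    using assms(2,3) by (auto simp: fun_eq_iff skew_mult_skew_monom surj_f_inv_f deg_less_def)
qed

end

locale monic_skew_divisor = skew_polynomial_ring \<sigma> for \<sigma> :: "'a::division_ring \<Rightarrow> 'a" +
  fixes f :: "nat \<Rightarrow> 'a" and m :: nat
  assumes monic: "f m = 1" and deg_f: "\<forall>n>m. f n = 0"
begin

lemma deg_less_skew_mult:
  assumes "deg_less q M"
  shows "deg_less (skew_mult \<sigma> q f) (M + m)"
  unfolding deg_less_def skew_mult_def
proof (intro allI impI sum.neutral ballI)
  fix n i
  assume "M + m \<le> n"
  then have "q i = 0 \<or> f (n - i) = 0"
    using assms by (cases "M \<le> i") (auto simp: deg_less_def intro!: deg_f[rule_format])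
  then show "q i * (\<sigma> ^^ i) (f (n - i)) = 0" by auto
qed

lemma skew_mult_top_coeff:
  assumes "deg_less q (Suc K)"
  shows "skew_mult \<sigma> q f (K + m) = q K"
proof -
  have "skew_mult \<sigma> q f (K + m) = (\<Sum>i\<le>K + m. if i = K then q K else 0)"
    unfolding skew_mult_def
  proof (rule sum.cong)
    fix i
    show "q i * (\<sigma> ^^ i) (f (K + m - i)) = (if i = K then q K else 0)"
      using assms monic deg_f[rule_format, of "K + m - i"]
      by (cases i K rule: linorder_cases) (auto simp: deg_less_def)
  qed simp
  then show ?thesis by simp
qed

lemma deg_less_skew_mult_cancel:
  assumes "q \<in> skew_polys" "deg_less (skew_mult \<sigma> q f) (M + m)"
  shows "deg_less q M"
proof -
  have step: "deg_less q K" if "deg_less q (Suc K)" "M \<le> K" for K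
  proof -
    have "q K = 0"
      using that skew_mult_top_coeff[OF that(1)] assms(2) by (simp add: deg_less_def)
    then show ?thesis
      using that(1) by (metis deg_less_def le_antisym not_less_eq_eq)
  qed
  have "deg_less q (M + k) \<Longrightarrow> deg_less q M" for k
  proof (induction k)
    case (Suc k)
    then show ?case
      using step[of "M + k"] by simp
  qed simp
  moreover obtain N where "deg_less q N"
    using assms(1) by (auto simp: skew_polys_def deg_less_def)
  then have "deg_less q (M + N)"
    by (simp add: deg_less_def)
  ultimately show ?thesis .
qed

lemma skew_division_exists:
  "deg_less g N \<Longrightarrow> \<exists>q\<in>skew_polys. \<exists>r. deg_less r m \<and> g = (\<lambda>n. skew_mult \<sigma> q f n + r n)"
proof (induction N arbitrary: g rule: less_induct)
  case (less N)
  show ?case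
  proof (cases "N \<le> m")
    case True
    then have "deg_less g m"
      using less.prems by (simp add: deg_less_def)
    then show ?thesis
      by (intro bexI[of _ "\<lambda>_. 0"]) (auto simp: skew_mult_zero_left skew_polys_def)
  next
    case False
    define K where "K = N - Suc m"
    define c where "c = (\<lambda>i. if i = K then g (K + m) else (0::'a))"
    have N: "N = Suc K + m"
      using False by (simp add: K_def)
    have c: "deg_less c (Suc K)"
      by (simp add: c_def deg_less_def)
    have "g n - skew_mult \<sigma> c f n = 0" if "K + m \<le> n" for n
    proof (cases "n = K + m")
      case True
      then show ?thesis
        using skew_mult_top_coeff[OF c] by (simp add: c_def)
    next
      case False
      then have "N \<le> n"
        using that N by simp
      then show ?thesis
        using less.prems deg_less_skew_mult[OF c] N by (simp add: deg_less_def)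
    qed
    then have "deg_less (\<lambda>n. g n - skew_mult \<sigma> c f n) (K + m)"
      by (simp add: deg_less_def)
    moreover have "K + m < N"
      using N by simp
    ultimately obtain q r where q: "q \<in> skew_polys" "deg_less r m"
      and "(\<lambda>n. g n - skew_mult \<sigma> c f n) = (\<lambda>n. skew_mult \<sigma> q f n + r n)"
      using less.IH by blast
    then have "g = (\<lambda>n. skew_mult \<sigma> (\<lambda>i. q i + c i) f n + r n)"
      by (auto simp: fun_eq_iff skew_mult_add_left algebra_simps dest: fun_cong)
    moreover have "(\<lambda>i. q i + c i) \<in> skew_polys"
      using skew_polys_add[OF q(1) deg_less_imp_skew_polys[OF c]] .
    ultimately show ?thesis
      using q(2) by blast
  qed
qed

lemma skew_remainder_unique:
  assumes "deg_less r1 m" "deg_less r2 m" "q1 \<in> skew_polys" "q2 \<in> skew_polys"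
    and eq: "(\<lambda>n. skew_mult \<sigma> q1 f n + r1 n) = (\<lambda>n. skew_mult \<sigma> q2 f n + r2 n)"
  shows "r1 = r2"
proof -
  let ?q = "\<lambda>n. q1 n - q2 n"
  have qf: "skew_mult \<sigma> ?q f n = r2 n - r1 n" for n
    using fun_cong[OF eq, of n] by (simp add: skew_mult_diff_left algebra_simps)
  then have "deg_less (skew_mult \<sigma> ?q f) (0 + m)"
    using assms(1,2) by (simp add: deg_less_def)
  then have "deg_less ?q 0"
    using deg_less_skew_mult_cancel skew_polys_diff assms(3,4) by blast
  then have "r2 n - r1 n = 0" for n
    using qf[of n] by (simp add: deg_less_def skew_mult_def)
  then show ?thesis by auto
qed

lemma skew_rem_eqI:
  assumes "deg_less r m" "q \<in> skew_polys" "g = (\<lambda>n. skew_mult \<sigma> q f n + r n)"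
  shows "skew_rem \<sigma> f m g = r"
  unfolding skew_rem_def
proof (rule the_equality)
  show "deg_less r m \<and> (\<exists>q\<in>skew_polys. g = (\<lambda>n. skew_mult \<sigma> q f n + r n))"
    using assms by blast
next
  fix r'
  assume "deg_less r' m \<and> (\<exists>q\<in>skew_polys. g = (\<lambda>n. skew_mult \<sigma> q f n + r' n))"
  then show "r' = r"
    using skew_remainder_unique assms by blast
qed

lemma skew_rem_spec:
  assumes "deg_less g N"
  shows "deg_less (skew_rem \<sigma> f m g) m"
    and "\<exists>q\<in>skew_polys. g = (\<lambda>n. skew_mult \<sigma> q f n + skew_rem \<sigma> f m g n)"
proof -
  obtain q r where "q \<in> skew_polys" "deg_less r m" "g = (\<lambda>n. skew_mult \<sigma> q f n + r n)"
    using skew_division_exists[OF assms] by blast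
  moreover from this have "skew_rem \<sigma> f m g = r"
    by (intro skew_rem_eqI)
  ultimately show "deg_less (skew_rem \<sigma> f m g) m"
    and "\<exists>q\<in>skew_polys. g = (\<lambda>n. skew_mult \<sigma> q f n + skew_rem \<sigma> f m g n)"
    by auto
qed

lemma deg_less_skew_monom_mult:
  "x \<in> Sf_carrier m \<Longrightarrow> deg_less (skew_mult \<sigma> (skew_monom j) x) (j + m)"
  by (auto simp: Sf_carrier_def deg_less_def skew_mult_skew_monom)

lemma surj_if_Sf_mult_skew_monom_onto:
  assumes f0: "f 0 \<noteq> 0" and j: "1 \<le> j" "j \<le> m"
    and onto: "Sf_carrier m \<subseteq> Sf_mult \<sigma> f m (skew_monom j) ` Sf_carrier m"
  shows "surj \<sigma>"
proof -
  obtain i where i: "j = Suc i"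
    using j(1) by (cases j) auto
  have "b \<in> range \<sigma>" for b
  proof -
    define d where "d = (\<sigma> ^^ i) (f 0)"
    define r where "r = (\<lambda>n. if n = i then - (b * d) else 0)"
    have "r \<in> Sf_carrier m"
      using i j by (auto simp: r_def Sf_carrier_def deg_less_def)
    then obtain x where x: "x \<in> Sf_carrier m" and rem: "Sf_mult \<sigma> f m (skew_monom j) x = r"
      using onto by blast
    define g where "g = skew_mult \<sigma> (skew_monom j) x"
    have g: "deg_less g (j + m)"
      unfolding g_def using x by (rule deg_less_skew_monom_mult)
    obtain q where q: "q \<in> skew_polys" "g = (\<lambda>n. skew_mult \<sigma> q f n + r n)"
      using skew_rem_spec(2)[OF g] rem by (auto simp: Sf_mult_def g_def)
    then have qf: "skew_mult \<sigma> q f n = g n - r n" for n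
      by simp
    have "deg_less (skew_mult \<sigma> q f) (j + m)"
      using g i by (auto simp: qf r_def deg_less_def)
    then have "deg_less q (Suc i)"
      using deg_less_skew_mult_cancel[OF q(1)] i by simp
    then have "q i = (\<sigma> ^^ j) (x (m - 1))"
      using skew_mult_top_coeff[of q i] i j by (simp add: qf g_def r_def skew_mult_skew_monom)
    moreover have "q i = b"
    proof -
      have "skew_mult \<sigma> q f i = q i * d"
        unfolding d_def
        by (intro skew_mult_lowest_coeff f0) (auto simp: qf g_def r_def skew_mult_skew_monom i)
      moreover have "skew_mult \<sigma> q f i = b * d"
        by (simp add: qf g_def r_def skew_mult_skew_monom i)
      moreover have "d \<noteq> 0"
        unfolding d_def using f0 by (rule funpow_nonzero)
      ultimately show ?thesis by simp
    qed
    ultimately show ?thesis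
      using i by auto
  qed
  then show ?thesis by blast
qed

lemma Sf_mult_skew_monom_onto_if_surj:
  assumes f0: "f 0 \<noteq> 0" and "surj \<sigma>"
  shows "Sf_mult \<sigma> f m (skew_monom j) ` Sf_carrier m = Sf_carrier m"
proof
  show "Sf_mult \<sigma> f m (skew_monom j) ` Sf_carrier m \<subseteq> Sf_carrier m"
    using skew_rem_spec(1)[OF deg_less_skew_monom_mult]
    by (auto simp: Sf_mult_def Sf_carrier_def)
  show "Sf_carrier m \<subseteq> Sf_mult \<sigma> f m (skew_monom j) ` Sf_carrier m"
  proof
    fix r :: "nat \<Rightarrow> 'a"
    assume r: "r \<in> Sf_carrier m"
    obtain q where q: "deg_less q j" "\<forall>n<j. skew_mult \<sigma> q f n + r n = 0"
      using exists_skew_mult_cancel_low_coeffs[of f, OF f0] by blast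
    define h where "h = (\<lambda>n. skew_mult \<sigma> q f n + r n)"
    have "deg_less h (j + m)"
      using deg_less_skew_mult[OF q(1)] r by (auto simp: h_def deg_less_def Sf_carrier_def)
    moreover have "\<forall>n<j. h n = 0"
      using q(2) by (simp add: h_def)
    ultimately obtain x where "x \<in> Sf_carrier m" "skew_mult \<sigma> (skew_monom j) x = h"
      using skew_monom_mult_onto[OF assms(2)] by blast
    moreover have "skew_rem \<sigma> f m h = r"
      using r q(1) by (intro skew_rem_eqI) (auto simp: h_def Sf_carrier_def deg_less_imp_skew_polys)
    ultimately show "r \<in> Sf_mult \<sigma> f m (skew_monom j) ` Sf_carrier m"
      unfolding Sf_mult_def by force
  qed
qed

end

theorem mainTheorem7:
  fixes \<sigma> :: "'a::division_ring \<Rightarrow> 'a" and f :: "nat \<Rightarrow> 'a" and m :: nat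
  assumes "ring_endo \<sigma>"
    and "m \<ge> 2"
    and "f m = 1" and "\<forall>n>m. f n = 0"
    and "f 0 \<noteq> 0"
  shows "(\<forall>j\<in>{1..m-1}. (Sf_mult \<sigma> f m (skew_monom j) ` Sf_carrier m = Sf_carrier m \<longleftrightarrow> surj \<sigma>))
         \<and> (\<not> surj \<sigma> \<longrightarrow> \<not> left_division_algebra \<sigma> f m)"
proof -
  interpret monic_skew_divisor \<sigma> f m
    using assms by unfold_locales auto
  have onto_iff: "Sf_mult \<sigma> f m (skew_monom j) ` Sf_carrier m = Sf_carrier m \<longleftrightarrow> surj \<sigma>"
    if "j \<in> {1..m-1}" for j
    using that assms(5) surj_if_Sf_mult_skew_monom_onto Sf_mult_skew_monom_onto_if_surj
    by fastforce
  moreover have "\<not> left_division_algebra \<sigma> f m" if "\<not> surj \<sigma>"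
  proof
    assume "left_division_algebra \<sigma> f m"
    moreover have "skew_monom 1 \<in> Sf_carrier m" "skew_monom 1 \<noteq> (\<lambda>_. 0::'a)"
      using assms(2) by (auto simp: Sf_carrier_def deg_less_def skew_monom_def fun_eq_iff)
    ultimately have "Sf_mult \<sigma> f m (skew_monom 1) ` Sf_carrier m = Sf_carrier m"
      unfolding left_division_algebra_def bij_betw_def by blast
    with onto_iff[of 1] assms(2) that show False by auto
  qed
  ultimately show ?thesis by blast
qed

end
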